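(* Every partial Steiner quadruple system of order $n$ has a cyclically $\ell$-good sequencing for each positive integer $\ell \leq 0.164\, n^{1/3}$.
   Context: A partial Steiner quadruple system of order $n$ is a pair $(X,\mathcal{B})$ where $X$ is an $n$-set of vertices ($n\ge 4$) and $\mathcal{B}$ is a collection of $4$-subsets of $X$ (blocks) such that each $3$-subset of $X$ is contained in at most one block. An independent set is a subset $Y\subseteq X$ containing no block. Let $\mathbb{Z}_n=\{0,\ldots,n-1\}$ be the cyclic group of order $n$. A sequencing is a bijection $\varphi:\mathbb{Z}_n\to X$. A set $S\subseteq X$ is cyclically consecutive if $S=\{\varphi(i),\varphi(i+1),\ldots,\varphi(i+|S|-1)\}$ for some $i\in\mathbb{Z}_n$ (addition in $\mathbb{Z}_n$). For a positive integer $\ell$, a sequencing is cyclically $\ell$-good if every set of $\ell$ cyclically consecutive vertices is an independent set. *)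

theory Defs
  imports Complex_Main
begin

definition partial_SQS :: "'a set \<Rightarrow> 'a set set \<Rightarrow> bool" where
  "partial_SQS X \<B> \<longleftrightarrow> finite X \<and> card X \<ge> 4 \<and>
     (\<forall>B\<in>\<B>. B \<subseteq> X \<and> card B = 4) \<and>
     (\<forall>T. T \<subseteq> X \<longrightarrow> card T = 3 \<longrightarrow> card {B\<in>\<B>. T \<subseteq> B} \<le> 1)"

definition independent :: "'a set set \<Rightarrow> 'a set \<Rightarrow> bool" where
  "independent \<B> Y \<longleftrightarrow> (\<forall>B\<in>\<B>. \<not> B \<subseteq> Y)"

text \<open>A sequencing is a bijection from Z_n, represented as {0..<n} with arithmetic mod n.\<close>
definition sequencing :: "'a set \<Rightarrow> (nat \<Rightarrow> 'a) \<Rightarrow> bool" where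
  "sequencing X \<phi> \<longleftrightarrow> bij_betw \<phi> {0..<card X} X"

definition cyc_consec :: "'a set \<Rightarrow> (nat \<Rightarrow> 'a) \<Rightarrow> 'a set \<Rightarrow> bool" where
  "cyc_consec X \<phi> S \<longleftrightarrow>
     (\<exists>i<card X. S = (\<lambda>j. \<phi> ((i + j) mod card X)) ` {0..<card S})"

definition cyclically_good :: "'a set \<Rightarrow> 'a set set \<Rightarrow> nat \<Rightarrow> (nat \<Rightarrow> 'a) \<Rightarrow> bool" where
  "cyclically_good X \<B> l \<phi> \<longleftrightarrow>
     (\<forall>S. S \<subseteq> X \<longrightarrow> card S = l \<longrightarrow> cyc_consec X \<phi> S \<longrightarrow> independent \<B> S)"

end

(*
  Choose a sequencing uniformly at random. For an ordered block (x1, x2, x3, x4), a start w and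
  offsets 0 = o1, o2, o3, o4 < l, consider the event that each xt sits at position w + ot (mod n);
  a sequencing avoiding all these events is cyclically l-good. Conditioned on avoiding any family of
  events compatible with it (equal positions exactly where the values are equal), such an event
  still has probability 1/(n(n-1)(n-2)(n-3)), by relabelling with a permutation of the points.
  Since three points determine a block, each event is incompatible with at most
  32 l^3 n(n-1)(n-2) others, so the lopsided local lemma applies once 128 l^3 <= n - 3, which
  l <= 0.164 n^(1/3) guarantees. For l < 4 every sequencing works, as blocks have four points.
*)
theory Submission
  imports Defs "HOL-Library.FuncSet"
begin

section \<open>A counting form of the lopsided local lemma\<close>

definition avoiding :: "'b set \<Rightarrow> ('i \<Rightarrow> 'b set) \<Rightarrow> 'i set \<Rightarrow> 'b set" where
  "avoiding \<Omega> E T = \<Omega> - \<Union>(E ` T)"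

lemma avoiding_empty [simp]: "avoiding \<Omega> E {} = \<Omega>"
  by (simp add: avoiding_def)

lemma avoiding_insert: "avoiding \<Omega> E (insert j T) = avoiding \<Omega> E T - E j"
  by (auto simp: avoiding_def)

lemma avoiding_antimono: "S \<subseteq> T \<Longrightarrow> avoiding \<Omega> E T \<subseteq> avoiding \<Omega> E S"
  by (auto simp: avoiding_def)

lemma card_Diff_ge_fraction:
  fixes x :: real
  assumes "finite A" and "real (card (E \<inter> A)) \<le> x * real (card A)"
  shows "(1 - x) * real (card A) \<le> real (card (A - E))"
proof -
  have "card A = card (A \<inter> E) + card (A - E)"
    using card_Int_Diff[OF assms(1)] .
  then show ?thesis
    using assms(2) by (simp add: Int_commute algebra_simps)
qed

lemma card_avoiding_Un_ge:
  fixes \<Omega> :: "'b set" and E :: "'i \<Rightarrow> 'b set" and x :: real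
  assumes "finite \<Omega>" and "finite U" and "0 \<le> x" "x \<le> 1"
    and step: "\<And>V j. V \<subseteq> U \<Longrightarrow> j \<in> U - V \<Longrightarrow>
      real (card (E j \<inter> avoiding \<Omega> E (S \<union> V))) \<le> x * real (card (avoiding \<Omega> E (S \<union> V)))"
  shows "(1 - x) ^ card U * real (card (avoiding \<Omega> E S)) \<le> real (card (avoiding \<Omega> E (S \<union> U)))"
  using \<open>finite U\<close> step
proof (induction U rule: finite_induct)
  case empty
  then show ?case by simp
next
  case (insert j U)
  have "(1 - x) ^ card U * real (card (avoiding \<Omega> E S)) \<le> real (card (avoiding \<Omega> E (S \<union> U)))"
    using insert.IH insert.prems by blast
  moreover have "(1 - x) * real (card (avoiding \<Omega> E (S \<union> U)))
      \<le> real (card (avoiding \<Omega> E (S \<union> U) - E j))"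
    using insert.hyps insert.prems[of U j] \<open>finite \<Omega>\<close>
    by (intro card_Diff_ge_fraction) (auto simp: avoiding_def)
  ultimately show ?case
    using insert.hyps \<open>x \<le> 1\<close>
    by (simp add: avoiding_insert[symmetric] mult.assoc)
      (meson diff_ge_0_iff_ge mult_left_mono order_trans)
qed

lemma avoiding_insert_nonempty:
  fixes x :: real
  assumes "finite \<Omega>" and "avoiding \<Omega> E T \<noteq> {}" and "x < 1"
    and "real (card (E j \<inter> avoiding \<Omega> E T)) \<le> x * real (card (avoiding \<Omega> E T))"
  shows "avoiding \<Omega> E (insert j T) \<noteq> {}"
proof -
  have fin: "finite (avoiding \<Omega> E T)"
    using assms(1) by (simp add: avoiding_def)
  then have "0 < (1 - x) * real (card (avoiding \<Omega> E T))"
    using assms(2,3) by (simp add: card_gt_0_iff)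
  also have "\<dots> \<le> real (card (avoiding \<Omega> E (insert j T)))"
    unfolding avoiding_insert using fin assms(4) by (rule card_Diff_ge_fraction)
  finally show ?thesis by auto
qed

(* Conditioning on the events of S outside G costs nothing by neg, and the at most d events
   in G shrink the space by a factor at least (1 - 2p)^d \<ge> 1/2. *)
lemma card_avoiding_conditional_le:
  fixes \<Omega> :: "'b set" and E :: "'i \<Rightarrow> 'b set" and p :: real and d :: nat
  assumes fin\<Omega>: "finite \<Omega>" and finS: "finite S" and deg: "card (S \<inter> G) \<le> d"
    and p0: "0 \<le> p" and pd: "4 * p * d \<le> 1" and p1: "p \<le> 1/4"
    and neg: "real (card (E a \<inter> avoiding \<Omega> E (S - G))) \<le> p * real (card (avoiding \<Omega> E (S - G)))"
    and smaller: "\<And>V j. V \<subset> S \<Longrightarrow> j \<in> S - V \<Longrightarrow>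
      real (card (E j \<inter> avoiding \<Omega> E V)) \<le> 2 * p * real (card (avoiding \<Omega> E V))"
  shows "real (card (E a \<inter> avoiding \<Omega> E S)) \<le> 2 * p * real (card (avoiding \<Omega> E S))"
proof -
  have "(1 - 2 * p) ^ card (S \<inter> G) * real (card (avoiding \<Omega> E (S - G)))
      \<le> real (card (avoiding \<Omega> E ((S - G) \<union> (S \<inter> G))))"
  proof (rule card_avoiding_Un_ge)
    fix V j assume "V \<subseteq> S \<inter> G" "j \<in> S \<inter> G - V"
    then show "real (card (E j \<inter> avoiding \<Omega> E (S - G \<union> V)))
        \<le> 2 * p * real (card (avoiding \<Omega> E (S - G \<union> V)))"
      by (intro smaller) auto
  qed (use fin\<Omega> finS p0 p1 in auto)
  moreover have "(S - G) \<union> (S \<inter> G) = S" by blast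
  moreover have "1/2 \<le> (1 - 2 * p) ^ card (S \<inter> G)"
  proof -
    have "(1 - 2 * p) ^ d \<le> (1 - 2 * p) ^ card (S \<inter> G)"
      using deg p0 p1 by (intro power_decreasing) auto
    moreover have "1 - real d * (2 * p) \<le> (1 - 2 * p) ^ d"
      using Bernoulli_inequality[of "- 2 * p" d] p1 by simp
    ultimately show ?thesis using pd by (simp add: algebra_simps)
  qed
  ultimately have "1/2 * real (card (avoiding \<Omega> E (S - G))) \<le> real (card (avoiding \<Omega> E S))"
    by (metis (no_types, lifting) mult_right_mono of_nat_0_le_iff order_trans)
  then have half: "real (card (avoiding \<Omega> E (S - G))) \<le> 2 * real (card (avoiding \<Omega> E S))"
    by simp
  have "card (E a \<inter> avoiding \<Omega> E S) \<le> card (E a \<inter> avoiding \<Omega> E (S - G))"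
    using fin\<Omega> avoiding_antimono[of "S - G" S \<Omega> E] by (intro card_mono) (auto simp: avoiding_def)
  then have "real (card (E a \<inter> avoiding \<Omega> E S)) \<le> p * real (card (avoiding \<Omega> E (S - G)))"
    using neg by linarith
  also have "\<dots> \<le> p * (2 * real (card (avoiding \<Omega> E S)))"
    using half p0 by (rule mult_left_mono)
  finally show ?thesis by simp
qed

lemma lopsided_local_lemma_invariant:
  fixes \<Omega> :: "'b set" and E :: "'i \<Rightarrow> 'b set" and G :: "'i \<Rightarrow> 'i set" and p :: real and d :: nat
  assumes fin\<Omega>: "finite \<Omega>" and ne: "\<Omega> \<noteq> {}" and finI: "finite I"
    and deg: "\<And>a. a \<in> I \<Longrightarrow> card (G a \<inter> I) \<le> d"
    and neg: "\<And>a T. a \<in> I \<Longrightarrow> T \<subseteq> I \<Longrightarrow> T \<inter> G a = {} \<Longrightarrow>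
      real (card (E a \<inter> avoiding \<Omega> E T)) \<le> p * real (card (avoiding \<Omega> E T))"
    and p0: "0 \<le> p" and pd: "4 * p * d \<le> 1" and p1: "p \<le> 1/4"
    and "S \<subseteq> I"
  shows "avoiding \<Omega> E S \<noteq> {} \<and>
    (\<forall>a \<in> I - S. real (card (E a \<inter> avoiding \<Omega> E S)) \<le> 2 * p * real (card (avoiding \<Omega> E S)))"
proof -
  have "finite S"
    using \<open>S \<subseteq> I\<close> finI finite_subset by blast
  then show ?thesis
    using \<open>S \<subseteq> I\<close>
  proof (induction S rule: finite_psubset_induct)
    case (psubset S)
    have IH: "avoiding \<Omega> E T \<noteq> {}"
      "\<And>a. a \<in> I - T \<Longrightarrow> real (card (E a \<inter> avoiding \<Omega> E T)) \<le> 2 * p * real (card (avoiding \<Omega> E T))"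
      if "T \<subset> S" for T
      using psubset.IH[OF that] that psubset.prems by auto
    have "avoiding \<Omega> E S \<noteq> {}"
    proof (cases "S = {}")
      case False
      then obtain j where j: "j \<in> S" by blast
      then have "avoiding \<Omega> E (insert j (S - {j})) \<noteq> {}"
        using IH[of "S - {j}"] psubset.prems p1 fin\<Omega>
        by (intro avoiding_insert_nonempty[where x = "2 * p"]) auto
      then show ?thesis
        using j by (simp add: insert_absorb)
    qed (use ne in simp)
    moreover have "real (card (E a \<inter> avoiding \<Omega> E S)) \<le> 2 * p * real (card (avoiding \<Omega> E S))"
      if a: "a \<in> I - S" for a
    proof (rule card_avoiding_conditional_le[OF fin\<Omega> psubset.hyps _ p0 pd p1])
      have "card (S \<inter> G a) \<le> card (G a \<inter> I)"
        using psubset.prems finI by (intro card_mono) auto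
      then show "card (S \<inter> G a) \<le> d"
        using deg a by (meson DiffD1 le_trans)
      show "real (card (E a \<inter> avoiding \<Omega> E (S - G a))) \<le> p * real (card (avoiding \<Omega> E (S - G a)))"
        using neg[of a "S - G a"] a psubset.prems by auto
      fix V j assume "V \<subset> S" "j \<in> S - V"
      then show "real (card (E j \<inter> avoiding \<Omega> E V)) \<le> 2 * p * real (card (avoiding \<Omega> E V))"
        using IH(2)[of V j] psubset.prems by auto
    qed
    ultimately show ?case by blast
  qed
qed

theorem lopsided_local_lemma:
  fixes \<Omega> :: "'b set" and E :: "'i \<Rightarrow> 'b set" and G :: "'i \<Rightarrow> 'i set" and p :: real and d :: nat
  assumes "finite \<Omega>" and "\<Omega> \<noteq> {}" and "finite I"
    and "\<And>a. a \<in> I \<Longrightarrow> card (G a \<inter> I) \<le> d"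
    and "\<And>a T. a \<in> I \<Longrightarrow> T \<subseteq> I \<Longrightarrow> T \<inter> G a = {} \<Longrightarrow>
      real (card (E a \<inter> avoiding \<Omega> E T)) \<le> p * real (card (avoiding \<Omega> E T))"
    and "0 \<le> p" and "4 * p * d \<le> 1" and "p \<le> 1/4"
  shows "avoiding \<Omega> E I \<noteq> {}"
  using lopsided_local_lemma_invariant[OF assms order_refl] by (rule conjunct1)

section \<open>Uniformly random sequencings\<close>

(* Extensional representatives make counting over sequencings X the uniform distribution. *)
definition sequencings :: "'a set \<Rightarrow> (nat \<Rightarrow> 'a) set" where
  "sequencings X = {\<phi> \<in> extensional {0..<card X}. bij_betw \<phi> {0..<card X} X}"

lemma finite_sequencings: "finite X \<Longrightarrow> finite (sequencings X)"
  by (rule finite_subset[OF _ finite_PiE[of "{0..<card X}" "\<lambda>_. X"]])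
    (auto simp: sequencings_def bij_betw_def PiE_def)

lemma sequencings_nonempty: "finite X \<Longrightarrow> sequencings X \<noteq> {}"
proof -
  assume "finite X"
  then obtain h where "bij_betw h {0..<card X} X"
    using ex_bij_betw_nat_finite by blast
  then have "restrict h {0..<card X} \<in> sequencings X"
    by (simp add: sequencings_def)
  then show ?thesis by blast
qed

lemma sequencing_if_in_sequencings: "\<phi> \<in> sequencings X \<Longrightarrow> sequencing X \<phi>"
  by (simp add: sequencings_def sequencing_def)

lemma restrict_comp_in_sequencings:
  assumes "\<phi> \<in> sequencings X" and "bij_betw \<rho> X X"
  shows "restrict (\<rho> \<circ> \<phi>) {0..<card X} \<in> sequencings X"
  using assms bij_betw_trans by (auto simp: sequencings_def)

fun placement :: "'a set \<Rightarrow> nat list \<times> 'a list \<Rightarrow> (nat \<Rightarrow> 'a) set" where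
  "placement X (ps, xs) = {\<phi> \<in> sequencings X. \<forall>t < length ps. \<phi> (ps ! t) = xs ! t}"

fun compatible :: "nat list \<times> 'a list \<Rightarrow> nat list \<times> 'a list \<Rightarrow> bool" where
  "compatible (ps, xs) (qs, ys) \<longleftrightarrow>
     (\<forall>t < length ps. \<forall>s < length qs. ps ! t = qs ! s \<longleftrightarrow> xs ! t = ys ! s)"

lemma permutation_extending_bij:
  assumes "finite X" "A \<subseteq> X" "B \<subseteq> X" "bij_betw f A B"
  obtains \<rho> where "bij_betw \<rho> X X" "\<And>z. z \<in> A \<Longrightarrow> \<rho> z = f z"
    "\<And>z. z \<in> X - A \<Longrightarrow> \<rho> z = z \<or> \<rho> z \<in> A"
proof -
  have "card A = card B"
    using assms(4) by (rule bij_betw_same_card)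
  then have "card (B - A) = card (A - B)"
    using assms(1-3) finite_subset by (metis card_Diff_subset_Int Int_commute finite_Int)
  then obtain h where h: "bij_betw h (B - A) (A - B)"
    using assms(1-3) finite_same_card_bij by (metis finite_Diff2 finite_subset)
  define \<rho> where "\<rho> z = (if z \<in> A then f z else if z \<in> B then h z else z)" for z
  have "bij_betw \<rho> A B"
    using assms(4) by (rule bij_betw_cong[THEN iffD1, rotated]) (simp add: \<rho>_def)
  moreover have "bij_betw \<rho> (B - A) (A - B)"
    using h by (rule bij_betw_cong[THEN iffD1, rotated]) (simp add: \<rho>_def)
  moreover have "bij_betw \<rho> (X - (A \<union> B)) (X - (A \<union> B))"
    by (simp add: bij_betw_def inj_on_def \<rho>_def)
  ultimately have "bij_betw \<rho> (A \<union> (B - A) \<union> (X - (A \<union> B))) (B \<union> (A - B) \<union> (X - (A \<union> B)))"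
    by (intro bij_betw_combine) auto
  moreover have "A \<union> (B - A) \<union> (X - (A \<union> B)) = X" "B \<union> (A - B) \<union> (X - (A \<union> B)) = X"
    using assms(2,3) by auto
  ultimately have "bij_betw \<rho> X X" by simp
  moreover have "\<rho> z = z \<or> \<rho> z \<in> A" if "z \<in> X - A" for z
    using h that by (auto simp: \<rho>_def bij_betw_def)
  ultimately show ?thesis
    using that by (simp add: \<rho>_def)
qed

lemma permutation_mapping_list:
  assumes "finite X" "distinct xs" "distinct ys" "length xs = length ys" "set xs \<subseteq> X" "set ys \<subseteq> X"
  obtains \<rho> where "bij_betw \<rho> X X" "\<And>t. t < length xs \<Longrightarrow> \<rho> (xs ! t) = ys ! t"
    "\<And>z. z \<in> X - set xs \<Longrightarrow> \<rho> z = z \<or> \<rho> z \<in> set xs"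
proof -
  have xs: "bij_betw ((!) xs) {..<length xs} (set xs)"
    using assms(2) by (rule bij_betw_nth) simp_all
  have "bij_betw ((!) ys) {..<length xs} (set ys)"
    using assms(3,4) by (intro bij_betw_nth) simp_all
  then have "bij_betw ((!) ys \<circ> the_inv_into {..<length xs} ((!) xs)) (set xs) (set ys)"
    using xs bij_betw_the_inv_into bij_betw_trans by blast
  then obtain \<rho> where \<rho>: "bij_betw \<rho> X X"
    "\<And>z. z \<in> set xs \<Longrightarrow> \<rho> z = ((!) ys \<circ> the_inv_into {..<length xs} ((!) xs)) z"
    "\<And>z. z \<in> X - set xs \<Longrightarrow> \<rho> z = z \<or> \<rho> z \<in> set xs"
    using permutation_extending_bij[OF assms(1,5,6)] by blast
  have "\<rho> (xs ! t) = ys ! t" if "t < length xs" for t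
    using xs that \<rho>(2)[of "xs ! t"] by (simp add: bij_betw_def the_inv_into_f_f)
  with \<rho>(1,3) show ?thesis
    using that by blast
qed

lemma placement_position_eq:
  assumes "\<phi> \<in> placement X (ps, xs)" and "set ps \<subseteq> {0..<card X}"
    and "t < length ps" and "i < card X" and "\<phi> i = xs ! t"
  shows "ps ! t = i"
proof -
  have "ps ! t < card X"
    using assms(2,3) nth_mem by fastforce
  moreover have "inj_on \<phi> {0..<card X}"
    using assms(1) by (simp add: sequencings_def bij_betw_def)
  ultimately show ?thesis
    using assms(1,3-5) by (auto simp: inj_on_def)
qed

lemma placement_if_permuted_placement:
  assumes \<phi>: "\<phi> \<in> placement X (ps, xs)" and len: "length xs = length ps"
    and ps: "set ps \<subseteq> {0..<card X}"
    and \<rho>: "\<And>z. z \<in> X - set xs \<Longrightarrow> \<rho> z = z \<or> \<rho> z \<in> set xs"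
    and \<rho>\<phi>: "restrict (\<rho> \<circ> \<phi>) {0..<card X} \<in> placement X (qs, ys)"
    and compat: "compatible (ps, xs) (qs, ys)"
  shows "\<phi> \<in> placement X (qs, ys)"
proof -
  have \<phi>_seq: "\<phi> \<in> sequencings X" and \<phi>_xs: "\<And>t. t < length ps \<Longrightarrow> \<phi> (ps ! t) = xs ! t"
    using \<phi> by auto
  have "\<phi> (qs ! s) = ys ! s" if s: "s < length qs" for s
  proof (cases "qs ! s < card X")
    case False
    then show ?thesis
      using \<phi>_seq \<rho>\<phi> s by (auto simp: sequencings_def extensional_def)
  next
    case True
    define z where "z = \<phi> (qs ! s)"
    have "z \<in> X"
      using \<phi>_seq True by (auto simp: sequencings_def bij_betw_def z_def)
    have \<rho>z: "\<rho> z = ys ! s"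
      using \<rho>\<phi> s True by (auto simp: z_def)
    have xs_z: "xs ! t = ys ! s" if "t < length ps" "xs ! t = z" for t
      using placement_position_eq[OF \<phi> ps that(1) True] that compat s by (auto simp: z_def)
    show ?thesis
    proof (cases "z \<in> set xs")
      case True
      then show ?thesis
        using len xs_z by (auto simp: in_set_conv_nth z_def)
    next
      case False
      have "\<rho> z \<notin> set xs"
      proof
        assume "\<rho> z \<in> set xs"
        then obtain t where t: "t < length ps" "xs ! t = ys ! s"
          using len \<rho>z by (auto simp: in_set_conv_nth)
        then have "ps ! t = qs ! s"
          using compat s by auto
        then have "z = xs ! t"
          using \<phi>_xs[OF t(1)] by (simp add: z_def)
        then show False
          using False t len by (metis nth_mem)
      qed
      then show ?thesis
        using \<rho>[of z] \<rho>z False \<open>z \<in> X\<close> by (simp add: z_def)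
    qed
  qed
  then show ?thesis
    using \<phi>_seq by simp
qed

lemma inj_on_restrict_comp_sequencings:
  assumes "bij_betw \<rho> X X"
  shows "inj_on (\<lambda>\<phi>. restrict (\<rho> \<circ> \<phi>) {0..<card X}) (sequencings X)"
proof (rule inj_onI)
  fix \<phi>1 \<phi>2 assume \<phi>: "\<phi>1 \<in> sequencings X" "\<phi>2 \<in> sequencings X"
    and eq: "restrict (\<rho> \<circ> \<phi>1) {0..<card X} = restrict (\<rho> \<circ> \<phi>2) {0..<card X}"
  show "\<phi>1 = \<phi>2"
  proof (rule extensionalityI)
    fix i assume i: "i \<in> {0..<card X}"
    have "\<rho> (\<phi>1 i) = \<rho> (\<phi>2 i)"
      using fun_cong[OF eq, of i] i by simp
    moreover have "\<phi>1 i \<in> X" "\<phi>2 i \<in> X"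
      using \<phi> i by (auto simp: sequencings_def bij_betw_def)
    ultimately show "\<phi>1 i = \<phi>2 i"
      using assms by (auto simp: bij_betw_def inj_on_def)
  qed (use \<phi> in \<open>auto simp: sequencings_def\<close>)
qed

(* Relabelling by a permutation of X sending xs to ys preserves avoidance of every pattern
   compatible with (ps, xs). *)
lemma card_placement_avoiding_le:
  fixes \<P> :: "(nat list \<times> 'a list) set"
  assumes finX: "finite X" and len: "length xs = length ps" "length ys = length ps"
    and dist: "distinct xs" "distinct ys" and sets: "set xs \<subseteq> X" "set ys \<subseteq> X"
    and ps: "set ps \<subseteq> {0..<card X}"
    and compat: "\<And>Q. Q \<in> \<P> \<Longrightarrow> compatible (ps, xs) Q"
  shows "card (placement X (ps, xs) \<inter> avoiding (sequencings X) (placement X) \<P>)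
       \<le> card (placement X (ps, ys) \<inter> avoiding (sequencings X) (placement X) \<P>)"
proof -
  let ?A = "avoiding (sequencings X) (placement X) \<P>"
  obtain \<rho> where \<rho>: "bij_betw \<rho> X X" "\<And>t. t < length xs \<Longrightarrow> \<rho> (xs ! t) = ys ! t"
    "\<And>z. z \<in> X - set xs \<Longrightarrow> \<rho> z = z \<or> \<rho> z \<in> set xs"
    using permutation_mapping_list[OF finX dist] len sets by metis
  define g where "g \<phi> = restrict (\<rho> \<circ> \<phi>) {0..<card X}" for \<phi> :: "nat \<Rightarrow> 'a"
  have g_seq: "g \<phi> \<in> sequencings X" if "\<phi> \<in> sequencings X" for \<phi>
    using restrict_comp_in_sequencings[OF that \<rho>(1)] by (simp add: g_def)
  have "g ` (placement X (ps, xs) \<inter> ?A) \<subseteq> placement X (ps, ys) \<inter> ?A"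
  proof clarify
    fix \<phi> assume \<phi>: "\<phi> \<in> placement X (ps, xs)" "\<phi> \<in> ?A"
    have "g \<phi> (ps ! t) = ys ! t" if "t < length ps" for t
    proof -
      have "ps ! t < card X" using ps that nth_mem by fastforce
      then show ?thesis using \<phi>(1) \<rho>(2) that len by (simp add: g_def)
    qed
    then have "g \<phi> \<in> placement X (ps, ys)"
      using \<phi>(1) g_seq by simp
    moreover have "g \<phi> \<notin> placement X Q" if "Q \<in> \<P>" for Q
    proof
      assume "g \<phi> \<in> placement X Q"
      moreover obtain qs zs where Q: "Q = (qs, zs)" by fastforce
      ultimately have "restrict (\<rho> \<circ> \<phi>) {0..<card X} \<in> placement X (qs, zs)"
        by (simp only: g_def)
      then have "\<phi> \<in> placement X Q"
        using placement_if_permuted_placement[OF \<phi>(1) len(1) ps \<rho>(3)] compat[OF that] Q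
        by blast
      then show False using \<phi>(2) that by (simp add: avoiding_def)
    qed
    ultimately show "g \<phi> \<in> placement X (ps, ys) \<inter> ?A"
      using g_seq \<phi> by (auto simp: avoiding_def)
  qed
  moreover have "inj_on g (sequencings X)"
    unfolding g_def by (rule inj_on_restrict_comp_sequencings[OF \<rho>(1)])
  then have "inj_on g (placement X (ps, xs) \<inter> ?A)"
    by (rule inj_on_subset) auto
  ultimately show ?thesis
    using finite_sequencings[OF finX] by (intro card_inj_on_le) auto
qed

lemma card_placement_avoiding_bound:
  fixes \<P> :: "(nat list \<times> 'a list) set"
  assumes finX: "finite X" and len: "length xs = length ps" and "distinct xs" and "set xs \<subseteq> X"
    and "set ps \<subseteq> {0..<card X}"
    and "\<And>Q. Q \<in> \<P> \<Longrightarrow> compatible (ps, xs) Q"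
  shows "card {ys. length ys = length ps \<and> distinct ys \<and> set ys \<subseteq> X}
           * card (placement X (ps, xs) \<inter> avoiding (sequencings X) (placement X) \<P>)
       \<le> card (avoiding (sequencings X) (placement X) \<P>)"
proof -
  let ?A = "avoiding (sequencings X) (placement X) \<P>"
  define D where "D = {ys. length ys = length ps \<and> distinct ys \<and> set ys \<subseteq> X}"
  have finD: "finite D"
    unfolding D_def using finite_lists_length_eq[OF finX] by (rule finite_subset[rotated]) auto
  have finA: "finite ?A"
    using finite_sequencings[OF finX] by (simp add: avoiding_def)
  have "card D * card (placement X (ps, xs) \<inter> ?A) \<le> (\<Sum>ys\<in>D. card (placement X (ps, ys) \<inter> ?A))"
    using card_placement_avoiding_le[OF finX len _ assms(3) _ assms(4) _ assms(5,6)]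
      sum_bounded_below[of D "card (placement X (ps, xs) \<inter> ?A)"]
    by (simp add: D_def)
  also have "\<dots> = card (\<Union>ys\<in>D. placement X (ps, ys) \<inter> ?A)"
  proof (rule card_UN_disjoint[symmetric])
    show "\<forall>ys\<in>D. \<forall>zs\<in>D. ys \<noteq> zs \<longrightarrow> (placement X (ps, ys) \<inter> ?A) \<inter> (placement X (ps, zs) \<inter> ?A) = {}"
      by (auto simp: D_def intro!: nth_equalityI)
  qed (use finD finA in auto)
  also have "\<dots> \<le> card ?A"
    using finA by (intro card_mono) auto
  finally show ?thesis by (simp add: D_def)
qed

section \<open>Ordered blocks\<close>

lemma prod_atLeastAtMost_top_eq:
  "k \<le> n \<Longrightarrow> \<Prod>{n - k + 1..n} = (\<Prod>i<k. n - i :: nat)"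
  by (rule prod.reindex_bij_witness[of _ "\<lambda>i. n - i" "\<lambda>j. n - j"]) auto

lemma card_distinct_lists_eq:
  "finite A \<Longrightarrow> k \<le> card A \<Longrightarrow>
    card {xs. length xs = k \<and> distinct xs \<and> set xs \<subseteq> A} = (\<Prod>i<k. card A - i)"
  using card_lists_distinct_length_eq[of A k] prod_atLeastAtMost_top_eq[of k "card A"] by simp

lemma finite_blocks: "partial_SQS X \<B> \<Longrightarrow> finite \<B>"
  unfolding partial_SQS_def by (meson Pow_iff finite_Pow_iff finite_subset subsetI)

lemma block_eq_if_three_common:
  assumes S: "partial_SQS X \<B>" and "B1 \<in> \<B>" "B2 \<in> \<B>"
    and "T \<subseteq> B1" "T \<subseteq> B2" "card T = 3"
  shows "B1 = B2"
proof -
  have "T \<subseteq> X" using S assms(2,4) by (auto simp: partial_SQS_def)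
  then have "card {B \<in> \<B>. T \<subseteq> B} \<le> 1"
    using S assms(6) by (auto simp: partial_SQS_def)
  then show ?thesis
    using card_le_Suc0_iff_eq[of "{B \<in> \<B>. T \<subseteq> B}"] finite_blocks[OF S] assms(2-5) by auto
qed

definition ordered_blocks :: "'a set set \<Rightarrow> 'a list set" where
  "ordered_blocks \<B> = {xs. length xs = 4 \<and> distinct xs \<and> set xs \<in> \<B>}"

lemma ordered_blocks_subset:
  "partial_SQS X \<B> \<Longrightarrow> ordered_blocks \<B> \<subseteq> {xs. length xs = 4 \<and> distinct xs \<and> set xs \<subseteq> X}"
  by (auto simp: ordered_blocks_def partial_SQS_def)

lemma finite_ordered_blocks:
  assumes "partial_SQS X \<B>"
  shows "finite (ordered_blocks \<B>)"
proof (rule finite_subset[OF ordered_blocks_subset[OF assms]])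
  have "finite X" using assms by (simp add: partial_SQS_def)
  show "finite {xs. length xs = 4 \<and> distinct xs \<and> set xs \<subseteq> X}"
    using finite_lists_length_eq[OF \<open>finite X\<close>, of 4] by (rule finite_subset[rotated]) auto
qed

lemma ordered_blocks_eq_if_three_agree:
  assumes S: "partial_SQS X \<B>" and xs: "xs \<in> ordered_blocks \<B>" and ys: "ys \<in> ordered_blocks \<B>"
    and ijk: "i < 4" "j < 4" "k < 4" "i \<noteq> j" "i \<noteq> k" "j \<noteq> k"
    and eq: "xs ! i = ys ! i" "xs ! j = ys ! j" "xs ! k = ys ! k"
  shows "xs = ys"
proof (rule nth_equalityI)
  have lx: "length xs = 4" "distinct xs" "set xs \<in> \<B>" and ly: "length ys = 4" "distinct ys" "set ys \<in> \<B>"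
    using xs ys by (auto simp: ordered_blocks_def)
  then show "length xs = length ys" by simp
  define T where "T = {xs ! i, xs ! j, xs ! k}"
  have "card T = 3"
    using ijk lx nth_eq_iff_index_eq[OF lx(2)] by (auto simp: T_def)
  moreover have "T \<subseteq> set xs"
    using ijk lx by (auto simp: T_def)
  moreover have "T \<subseteq> set ys"
    using ijk ly by (auto simp: T_def eq)
  ultimately have same: "set xs = set ys"
    using block_eq_if_three_common[OF S lx(3) ly(3)] by blast
  have fourth: "card (set xs - T) = 1"
    using card_Diff_subset[OF _ \<open>T \<subseteq> set xs\<close>] \<open>card T = 3\<close> distinct_card[OF lx(2)] lx(1)
    by (simp add: T_def)
  fix m assume m: "m < length xs"
  show "xs ! m = ys ! m"
  proof (cases "m \<in> {i, j, k}")
    case True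
    then show ?thesis using eq by auto
  next
    case False
    have "xs ! m \<in> set xs - T"
      using m False ijk lx nth_eq_iff_index_eq[OF lx(2)] by (auto simp: T_def)
    moreover have "ys ! m \<in> set xs - T"
      using m False ijk lx(1) ly same nth_eq_iff_index_eq[OF ly(2)] by (auto simp: T_def eq)
    ultimately show ?thesis
      using fourth card_1_singletonE by (metis singletonD)
  qed
qed

lemma card_ordered_blocks_le:
  assumes S: "partial_SQS X \<B>"
  shows "card (ordered_blocks \<B>) \<le> card X * (card X - 1) * (card X - 2)"
proof -
  have finX: "finite X" and n4: "4 \<le> card X"
    using S by (auto simp: partial_SQS_def)
  have "inj_on (take 3) (ordered_blocks \<B>)"
  proof (rule inj_onI)
    fix xs ys assume xs: "xs \<in> ordered_blocks \<B>" and ys: "ys \<in> ordered_blocks \<B>"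
      and eq: "take 3 xs = take 3 ys"
    have "xs ! t = ys ! t" if "t < 3" for t
      using arg_cong[OF eq, of "\<lambda>zs. zs ! t"] that by simp
    then show "xs = ys"
      by (intro ordered_blocks_eq_if_three_agree[OF S xs ys, of 0 1 2]) auto
  qed
  moreover have "take 3 ` ordered_blocks \<B> \<subseteq> {ys. length ys = 3 \<and> distinct ys \<and> set ys \<subseteq> X}"
    using ordered_blocks_subset[OF S] by (auto dest: in_set_takeD)
  moreover have "finite {ys. length ys = 3 \<and> distinct ys \<and> set ys \<subseteq> X}"
    using finite_lists_length_eq[OF finX, of 3] by (rule finite_subset[rotated]) auto
  ultimately have "card (ordered_blocks \<B>) \<le> card {ys. length ys = 3 \<and> distinct ys \<and> set ys \<subseteq> X}"
    by (rule card_inj_on_le)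
  also have "\<dots> = card X * (card X - 1) * (card X - 2)"
    using finX n4 by (simp add: card_distinct_lists_eq numeral_eq_Suc lessThan_Suc)
  finally show ?thesis .
qed

lemma card_ordered_blocks_nth_le:
  assumes S: "partial_SQS X \<B>" and t: "t < 4"
  shows "card {xs \<in> ordered_blocks \<B>. xs ! t = x} \<le> (card X - 1) * (card X - 2)"
proof (cases "x \<in> X")
  case False
  have "xs ! t \<in> X" if "xs \<in> ordered_blocks \<B>" for xs
  proof -
    have "length xs = 4" "set xs \<subseteq> X"
      using that ordered_blocks_subset[OF S] by auto
    then show ?thesis using t nth_mem[of t xs] by auto
  qed
  then have "{xs \<in> ordered_blocks \<B>. xs ! t = x} = {}"
    using False by auto
  then show ?thesis by (metis card.empty le0)
next
  case True
  have finX: "finite X" and n4: "4 \<le> card X"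
    using S by (auto simp: partial_SQS_def)
  define i where "i = (t + 1) mod 4"
  define j where "j = (t + 2) mod 4"
  have ij: "i < 4" "j < 4" "t \<noteq> i" "t \<noteq> j" "i \<noteq> j"
    using t unfolding i_def j_def by presburger+
  let ?A = "{xs \<in> ordered_blocks \<B>. xs ! t = x}"
  let ?L = "{ys. length ys = 2 \<and> distinct ys \<and> set ys \<subseteq> X - {x}}"
  have "inj_on (\<lambda>xs. [xs ! i, xs ! j]) ?A"
  proof (rule inj_onI)
    fix xs ys assume "xs \<in> ?A" "ys \<in> ?A" "[xs ! i, xs ! j] = [ys ! i, ys ! j]"
    then show "xs = ys"
      using ordered_blocks_eq_if_three_agree[OF S, of xs ys t i j] t ij by simp
  qed
  moreover have "(\<lambda>xs. [xs ! i, xs ! j]) ` ?A \<subseteq> ?L"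
  proof (rule image_subsetI)
    fix xs assume "xs \<in> ?A"
    then have xs: "xs \<in> ordered_blocks \<B>" "x = xs ! t" by auto
    then have len: "length xs = 4" and dist: "distinct xs" and "set xs \<subseteq> X"
      using ordered_blocks_subset[OF S] by auto
    then have "xs ! i \<in> X" "xs ! j \<in> X"
      using ij nth_mem[of i xs] nth_mem[of j xs] by auto
    moreover have "xs ! i \<noteq> xs ! j" "xs ! i \<noteq> xs ! t" "xs ! j \<noteq> xs ! t"
      using t ij len nth_eq_iff_index_eq[OF dist] by auto
    ultimately show "[xs ! i, xs ! j] \<in> ?L"
      using xs(2) by auto
  qed
  moreover have "finite ?L"
    using finite_lists_length_eq[OF finite_Diff[OF finX], of "{x}" 2] by (rule finite_subset[rotated]) auto
  ultimately have "card ?A \<le> card ?L"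
    by (rule card_inj_on_le)
  also have "\<dots> = (card X - 1) * (card X - 2)"
    using finX n4 True by (simp add: card_distinct_lists_eq numeral_eq_Suc lessThan_Suc)
  finally show ?thesis .
qed

lemma card_ordered_blocks_containing_le:
  assumes S: "partial_SQS X \<B>"
  shows "card {xs \<in> ordered_blocks \<B>. x \<in> set xs} \<le> 4 * ((card X - 1) * (card X - 2))"
proof -
  have "{xs \<in> ordered_blocks \<B>. x \<in> set xs} = (\<Union>t<4. {xs \<in> ordered_blocks \<B>. xs ! t = x})"
    by (auto simp: ordered_blocks_def in_set_conv_nth)
  then have "card {xs \<in> ordered_blocks \<B>. x \<in> set xs} \<le> (\<Sum>t<4. card {xs \<in> ordered_blocks \<B>. xs ! t = x})"
    by (simp add: card_UN_le)
  also have "\<dots> \<le> (\<Sum>t<4::nat. (card X - 1) * (card X - 2))"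
    by (intro sum_mono card_ordered_blocks_nth_le[OF S]) simp
  finally show ?thesis by simp
qed

section \<open>Window events\<close>

lemma inj_on_add_mod: "inj_on (\<lambda>j. (i + j) mod n) {..<n::nat}"
proof -
  have "j = k" if "j \<le> k" "k < n" "(i + j) mod n = (i + k) mod n" for j k
  proof -
    have "n dvd k - j"
      using mod_eq_dvd_iff_nat[of "i + j" "i + k" n] that by simp
    then show ?thesis
      using that by (metis dvd_imp_le le_antisym less_imp_diff_less not_le zero_less_diff)
  qed
  then show ?thesis
    by (intro inj_onI) (metis lessThan_iff nle_le)
qed

definition offsets :: "nat \<Rightarrow> nat list set" where
  "offsets l = {os. length os = 4 \<and> os ! 0 = 0 \<and> set os \<subseteq> {..<l}}"

lemma finite_offsets: "finite (offsets l)"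
  using finite_lists_length_eq[of "{..<l}" 4]
  by (rule finite_subset[rotated]) (auto simp: offsets_def)

lemma card_offsets_le: "card (offsets l) \<le> l ^ 3"
proof -
  have "offsets l \<subseteq> Cons 0 ` {os. set os \<subseteq> {..<l} \<and> length os = 3}"
  proof
    fix os assume os: "os \<in> offsets l"
    then obtain q os' where "os = q # os'"
      by (cases os) (auto simp: offsets_def)
    then show "os \<in> Cons 0 ` {os. set os \<subseteq> {..<l} \<and> length os = 3}"
      using os by (auto simp: offsets_def)
  qed
  then have "card (offsets l) \<le> card (Cons 0 ` {os. set os \<subseteq> {..<l} \<and> length os = 3})"
    by (intro card_mono finite_imageI finite_lists_length_eq) auto
  also have "\<dots> \<le> card {os. set os \<subseteq> {..<l} \<and> length os = 3}"
    by (rule card_image_le) (simp add: finite_lists_length_eq)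
  also have "\<dots> = l ^ 3"
    by (simp add: card_lists_length_eq)
  finally show ?thesis .
qed

(* The window (w, os, xs) places the ordered block xs at positions w + os (mod n). Since
   os ! 0 = 0, w is the position of xs ! 0: this normalisation leaves l^3, not l^4, offsets. *)
fun window_pattern :: "nat \<Rightarrow> nat \<times> nat list \<times> 'a list \<Rightarrow> nat list \<times> 'a list" where
  "window_pattern n (w, os, xs) = (map (\<lambda>q. (w + q) mod n) os, xs)"

definition block_windows :: "nat \<Rightarrow> nat \<Rightarrow> 'a set set \<Rightarrow> (nat \<times> nat list \<times> 'a list) set" where
  "block_windows n l \<B> = {..<n} \<times> offsets l \<times> ordered_blocks \<B>"

lemma finite_block_windows: "partial_SQS X \<B> \<Longrightarrow> finite (block_windows n l \<B>)"
  by (simp add: block_windows_def finite_offsets finite_ordered_blocks)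

lemma inj_on_cyclic_window:
  assumes \<phi>: "\<phi> \<in> sequencings X" and l: "l \<le> card X" and i: "i < card X"
  shows "inj_on (\<lambda>j. \<phi> ((i + j) mod card X)) {..<l}"
proof (rule inj_onI)
  fix j k assume jk: "j \<in> {..<l}" "k \<in> {..<l}" "\<phi> ((i + j) mod card X) = \<phi> ((i + k) mod card X)"
  have "inj_on \<phi> {..<card X}"
    using \<phi> by (auto simp: sequencings_def bij_betw_def atLeast0LessThan)
  moreover have "(i + j) mod card X < card X" "(i + k) mod card X < card X"
    using i by simp_all
  ultimately have "(i + j) mod card X = (i + k) mod card X"
    using jk(3) by (auto simp: inj_on_def)
  moreover have "j \<in> {..<card X}" "k \<in> {..<card X}"
    using jk(1,2) l by auto
  ultimately show "j = k"
    by (rule inj_onD[OF inj_on_add_mod])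
qed

lemma sorted_offsets_in_offsets:
  assumes "set js \<subseteq> {..<l}" and "length js = 4" and "sorted js"
  shows "map (\<lambda>j. j - js ! 0) js \<in> offsets l"
proof -
  have "js ! t < l" if "t < 4" for t
    using assms(1,2) that nth_mem[of t js] by fastforce
  then have "js ! t - js ! 0 < l" if "t < 4" for t
    using that less_imp_diff_less by blast
  then show ?thesis
    using assms(2) by (auto simp: offsets_def in_set_conv_nth)
qed

lemma block_in_window_placement:
  assumes \<phi>: "\<phi> \<in> sequencings X" and l: "l \<le> card X" and i: "i < card X"
    and B: "B \<in> \<B>" "card B = 4" "B \<subseteq> (\<lambda>j. \<phi> ((i + j) mod card X)) ` {..<l}"
  shows "\<exists>b \<in> block_windows (card X) l \<B>. \<phi> \<in> placement X (window_pattern (card X) b)"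
proof -
  define n where "n = card X"
  define g where "g j = \<phi> ((i + j) mod n)" for j
  have g_inj: "inj_on g {..<l}"
    unfolding g_def[abs_def] n_def by (rule inj_on_cyclic_window[OF \<phi> l i])
  define J where "J = {j \<in> {..<l}. g j \<in> B}"
  have J: "J \<subseteq> {..<l}" "g ` J = B"
    using B(3) by (auto simp: J_def g_def n_def)
  have "card J = 4"
    using card_image[OF inj_on_subset[OF g_inj J(1)]] J(2) B(2) by simp
  define js where "js = sorted_list_of_set J"
  have js: "set js = J" "distinct js" "sorted js" "length js = 4"
    using \<open>card J = 4\<close> finite_subset[OF J(1)] by (auto simp: js_def)
  define os where "os = map (\<lambda>j. j - js ! 0) js"
  define xs where "xs = map g js"
  have "os \<in> offsets l"
    unfolding os_def using js J(1) by (intro sorted_offsets_in_offsets) auto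
  moreover have "xs \<in> ordered_blocks \<B>"
    using js J B(1) inj_on_subset[OF g_inj J(1)] by (simp add: ordered_blocks_def xs_def distinct_map)
  moreover have "(i + js ! 0) mod n < n"
    using i by (simp add: n_def)
  moreover have "\<phi> \<in> placement X (window_pattern n ((i + js ! 0) mod n, os, xs))"
  proof -
    have "\<phi> (((i + js ! 0) mod n + (js ! t - js ! 0)) mod n) = g (js ! t)" if "t < 4" for t
    proof -
      have "js ! 0 \<le> js ! t"
        using js(3,4) that by (simp add: sorted_iff_nth_mono)
      then have "i + js ! 0 + (js ! t - js ! 0) = i + js ! t"
        by simp
      then have "((i + js ! 0) mod n + (js ! t - js ! 0)) mod n = (i + js ! t) mod n"
        by (metis mod_add_left_eq)
      then show ?thesis by (simp add: g_def)
    qed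
    then show ?thesis
      using \<phi> js(4) by (simp add: os_def xs_def)
  qed
  ultimately show ?thesis
    by (auto simp: block_windows_def n_def)
qed

definition window_event :: "'a set \<Rightarrow> nat \<times> nat list \<times> 'a list \<Rightarrow> (nat \<Rightarrow> 'a) set" where
  "window_event X b = placement X (window_pattern (card X) b)"

lemma avoiding_window_event:
  "avoiding \<Omega> (window_event X) T = avoiding \<Omega> (placement X) (window_pattern (card X) ` T)"
  by (auto simp: avoiding_def window_event_def)

lemma cyclically_good_if_avoiding_window_events:
  assumes S: "partial_SQS X \<B>" and l: "l \<le> card X"
    and \<phi>: "\<phi> \<in> avoiding (sequencings X) (window_event X) (block_windows (card X) l \<B>)"
  shows "cyclically_good X \<B> l \<phi>"
  unfolding cyclically_good_def independent_def
proof (intro allI impI ballI notI)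
  fix T B assume T: "card T = l" "cyc_consec X \<phi> T" and B: "B \<in> \<B>" "B \<subseteq> T"
  obtain i where i: "i < card X" and "T = (\<lambda>j. \<phi> ((i + j) mod card X)) ` {..<l}"
    using T by (auto simp: cyc_consec_def atLeast0LessThan)
  then have "B \<subseteq> (\<lambda>j. \<phi> ((i + j) mod card X)) ` {..<l}"
    using B(2) by simp
  moreover have "\<phi> \<in> sequencings X" "card B = 4"
    using \<phi> S B(1) by (auto simp: avoiding_def partial_SQS_def)
  ultimately have "\<exists>b \<in> block_windows (card X) l \<B>. \<phi> \<in> window_event X b"
    unfolding window_event_def using block_in_window_placement[OF _ l i B(1)] by blast
  then show False
    using \<phi> by (auto simp: avoiding_def)
qed

lemma cyclically_good_if_less_4:
  assumes "partial_SQS X \<B>" and "l < 4"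
  shows "cyclically_good X \<B> l \<phi>"
  unfolding cyclically_good_def independent_def
proof (intro allI impI ballI notI)
  fix T B assume "T \<subseteq> X" "card T = l" "B \<in> \<B>" "B \<subseteq> T"
  moreover have "finite X" "card B = 4"
    using assms(1) \<open>B \<in> \<B>\<close> by (auto simp: partial_SQS_def)
  ultimately have "4 \<le> l"
    using card_mono[of T B] finite_subset by metis
  then show False using assms(2) by simp
qed

lemma window_event_conditional_bound:
  assumes S: "partial_SQS X \<B>" and a: "a \<in> block_windows (card X) l \<B>"
    and compat: "\<And>b. b \<in> T \<Longrightarrow> compatible (window_pattern (card X) a) (window_pattern (card X) b)"
  shows "real (card (window_event X a \<inter> avoiding (sequencings X) (window_event X) T))
    \<le> 1 / real (card X * (card X - 1) * (card X - 2) * (card X - 3))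
      * real (card (avoiding (sequencings X) (window_event X) T))"
proof -
  define n where "n = card X"
  have finX: "finite X" and n4: "4 \<le> n" and blocks: "\<And>B. B \<in> \<B> \<Longrightarrow> B \<subseteq> X"
    using S by (auto simp: partial_SQS_def n_def)
  obtain w os xs where a_eq: "a = (w, os, xs)"
    by (cases a) auto
  define ps where "ps = map (\<lambda>q. (w + q) mod n) os"
  have len: "length xs = length ps" "length ps = 4" and xs: "distinct xs" "set xs \<subseteq> X"
    using a blocks by (auto simp: a_eq ps_def block_windows_def offsets_def ordered_blocks_def)
  have ps: "set ps \<subseteq> {0..<card X}"
    using n4 by (auto simp: ps_def n_def)
  have compat': "\<And>Q. Q \<in> window_pattern n ` T \<Longrightarrow> compatible (ps, xs) Q"
    using compat by (auto simp: a_eq ps_def n_def)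
  have "card {ys. length ys = 4 \<and> distinct ys \<and> set ys \<subseteq> X}
      * card (placement X (ps, xs) \<inter> avoiding (sequencings X) (placement X) (window_pattern n ` T))
    \<le> card (avoiding (sequencings X) (placement X) (window_pattern n ` T))"
    using card_placement_avoiding_bound[OF finX len(1) xs ps compat'] len(2) by simp
  moreover have "card {ys. length ys = 4 \<and> distinct ys \<and> set ys \<subseteq> X} = n * (n - 1) * (n - 2) * (n - 3)"
    using finX n4 by (simp add: card_distinct_lists_eq n_def numeral_eq_Suc lessThan_Suc)
  ultimately have "real (n * (n - 1) * (n - 2) * (n - 3))
      * real (card (window_event X a \<inter> avoiding (sequencings X) (window_event X) T))
    \<le> real (card (avoiding (sequencings X) (window_event X) T))"
    unfolding avoiding_window_event of_nat_mult[symmetric] of_nat_le_iff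
    by (simp add: window_event_def a_eq ps_def n_def)
  moreover have "0 < real (n * (n - 1) * (n - 2) * (n - 3))"
    using n4 by simp
  moreover have "x \<le> 1 / N * y" if "N * x \<le> y" "0 < N" for x y N :: real
    using that by (simp add: field_simps)
  ultimately show ?thesis
    unfolding n_def by blast
qed

lemma card_windows_at_position_le:
  assumes S: "partial_SQS X \<B>" and s: "s < 4"
  shows "card {b \<in> block_windows n l \<B>. fst (window_pattern n b) ! s = u}
    \<le> l ^ 3 * (card X * (card X - 1) * (card X - 2))"
proof -
  let ?W = "{b \<in> block_windows n l \<B>. fst (window_pattern n b) ! s = u}"
  have "inj_on snd ?W"
  proof (rule inj_onI)
    fix b1 b2 assume b: "b1 \<in> ?W" "b2 \<in> ?W" "snd b1 = snd b2"
    obtain w1 w2 os xs where b_eq: "b1 = (w1, os, xs)" "b2 = (w2, os, xs)"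
      using b(3) by (cases b1, cases b2) auto
    have "length os = 4" "w1 < n" "w2 < n"
      using b(1,2) by (auto simp: b_eq block_windows_def offsets_def)
    moreover have "(os ! s + w1) mod n = (os ! s + w2) mod n"
      using b(1,2) s \<open>length os = 4\<close> by (auto simp: b_eq add.commute)
    ultimately have "w1 = w2"
      using inj_onD[OF inj_on_add_mod[of "os ! s" n]] by blast
    then show "b1 = b2" by (simp add: b_eq)
  qed
  moreover have "snd ` ?W \<subseteq> offsets l \<times> ordered_blocks \<B>"
    by (auto simp: block_windows_def)
  ultimately have "card ?W \<le> card (offsets l \<times> ordered_blocks \<B>)"
    using finite_offsets finite_ordered_blocks[OF S] by (intro card_inj_on_le) auto
  also have "\<dots> \<le> l ^ 3 * (card X * (card X - 1) * (card X - 2))"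
    using card_offsets_le card_ordered_blocks_le[OF S] by (simp add: card_cartesian_product mult_le_mono)
  finally show ?thesis .
qed

lemma card_windows_containing_le:
  assumes S: "partial_SQS X \<B>"
  shows "card {b \<in> block_windows n l \<B>. x \<in> set (snd (window_pattern n b))}
    \<le> n * (l ^ 3 * (4 * ((card X - 1) * (card X - 2))))"
proof -
  have "{b \<in> block_windows n l \<B>. x \<in> set (snd (window_pattern n b))}
      \<subseteq> {..<n} \<times> offsets l \<times> {xs \<in> ordered_blocks \<B>. x \<in> set xs}"
    by (auto simp: block_windows_def)
  then have "card {b \<in> block_windows n l \<B>. x \<in> set (snd (window_pattern n b))}
      \<le> card ({..<n} \<times> offsets l \<times> {xs \<in> ordered_blocks \<B>. x \<in> set xs})"
    using finite_offsets finite_ordered_blocks[OF S] by (intro card_mono) auto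
  also have "\<dots> \<le> n * (l ^ 3 * (4 * ((card X - 1) * (card X - 2))))"
    using card_offsets_le card_ordered_blocks_containing_le[OF S, of x]
    by (simp add: card_cartesian_product mult_le_mono)
  finally show ?thesis .
qed

lemma length_window_pattern:
  assumes "b \<in> block_windows n l \<B>"
  shows "length (fst (window_pattern n b)) = 4" and "length (snd (window_pattern n b)) = 4"
proof -
  obtain w os xs where "b = (w, os, xs)"
    by (cases b) auto
  then show "length (fst (window_pattern n b)) = 4" "length (snd (window_pattern n b)) = 4"
    using assms by (auto simp: block_windows_def offsets_def ordered_blocks_def)
qed

lemma incompatible_windows_subset:
  fixes a :: "nat \<times> nat list \<times> 'a list" and n l :: nat and \<B> :: "'a set set"
  defines "W \<equiv> block_windows n l \<B>" and "pos \<equiv> \<lambda>b. fst (window_pattern n b)"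
    and "blk \<equiv> \<lambda>b. snd (window_pattern n b)"
  assumes a: "a \<in> W"
  shows "{b. \<not> compatible (window_pattern n a) (window_pattern n b)} \<inter> W
    \<subseteq> (\<Union>t<4. \<Union>s<4. {b \<in> W. pos b ! s = pos a ! t}) \<union> (\<Union>t<4. {b \<in> W. blk a ! t \<in> set (blk b)})"
proof
  fix b assume "b \<in> {b. \<not> compatible (window_pattern n a) (window_pattern n b)} \<inter> W"
  then have b: "\<not> compatible (pos a, blk a) (pos b, blk b)" "b \<in> W"
    by (simp_all add: pos_def blk_def)
  have "length (pos a) = 4" "length (pos b) = 4"
    using length_window_pattern(1) a b(2) by (simp_all add: W_def pos_def)
  then obtain t s where ts: "t < 4" "s < 4" "(pos a ! t = pos b ! s) \<noteq> (blk a ! t = blk b ! s)"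
    using b(1) by auto
  show "b \<in> (\<Union>t<4. \<Union>s<4. {b \<in> W. pos b ! s = pos a ! t}) \<union> (\<Union>t<4. {b \<in> W. blk a ! t \<in> set (blk b)})"
  proof (cases "blk a ! t = blk b ! s")
    case True
    then have "blk a ! t \<in> set (blk b)"
      using length_window_pattern(2)[of b] b(2) ts(2) by (metis W_def blk_def nth_mem)
    then show ?thesis
      using ts(1) b(2) by auto
  next
    case False
    then have "pos b ! s = pos a ! t"
      using ts(3) by simp
    then show ?thesis
      using ts(1,2) b(2) by blast
  qed
qed

lemma card_incompatible_windows_le:
  assumes S: "partial_SQS X \<B>" and a: "a \<in> block_windows (card X) l \<B>"
  shows "card ({b. \<not> compatible (window_pattern (card X) a) (window_pattern (card X) b)}
      \<inter> block_windows (card X) l \<B>) \<le> 32 * l ^ 3 * (card X * (card X - 1) * (card X - 2))"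
proof -
  define n where "n = card X"
  define W where "W = block_windows n l \<B>"
  define pos where "pos b = fst (window_pattern n b)" for b :: "nat \<times> nat list \<times> 'a list"
  define blk where "blk b = snd (window_pattern n b)" for b :: "nat \<times> nat list \<times> 'a list"
  define P1 where "P1 = (\<Union>t<4. \<Union>s<4. {b \<in> W. pos b ! s = pos a ! t})"
  define P2 where "P2 = (\<Union>t<4. {b \<in> W. blk a ! t \<in> set (blk b)})"
  have "finite W"
    using finite_block_windows[OF S] by (simp add: W_def)
  moreover have "{b. \<not> compatible (window_pattern n a) (window_pattern n b)} \<inter> W \<subseteq> P1 \<union> P2"
    using incompatible_windows_subset[of a n l \<B>] a
    unfolding P1_def P2_def W_def pos_def[abs_def] blk_def[abs_def] n_def by blast
  ultimately have "card ({b. \<not> compatible (window_pattern n a) (window_pattern n b)} \<inter> W)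
      \<le> card (P1 \<union> P2)"
    by (intro card_mono) (auto simp: P1_def P2_def)
  also have "\<dots> \<le> (\<Sum>t<4. \<Sum>s<4. card {b \<in> W. pos b ! s = pos a ! t})
      + (\<Sum>t<4. card {b \<in> W. blk a ! t \<in> set (blk b)})"
    unfolding P1_def P2_def
    by (intro order.trans[OF card_Un_le] add_mono order.trans[OF card_UN_le]
        sum_mono card_UN_le finite_lessThan)
  also have "\<dots> \<le> (\<Sum>t<4::nat. \<Sum>s<4::nat. l ^ 3 * (n * (n - 1) * (n - 2)))
      + (\<Sum>t<4::nat. n * (l ^ 3 * (4 * ((n - 1) * (n - 2)))))"
    unfolding W_def pos_def blk_def n_def
    by (intro add_mono sum_mono card_windows_at_position_le[OF S] card_windows_containing_le[OF S])
      simp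
  also have "\<dots> = 32 * l ^ 3 * (n * (n - 1) * (n - 2))"
    by (simp add: ac_simps)
  finally show ?thesis by (simp add: n_def W_def)
qed

lemma cube_bound_of_root_bound:
  fixes l n :: nat
  assumes "real l \<le> 0.164 * root 3 (real n)" and "4 \<le> l"
  shows "128 * l ^ 3 + 3 \<le> n"
proof -
  have "real l ^ 3 \<le> (0.164 * root 3 (real n)) ^ 3"
    using assms(1) by (intro power_mono) auto
  also have "\<dots> = 0.164 ^ 3 * root 3 (real n) ^ 3"
    by (rule power_mult_distrib)
  also have "root 3 (real n) ^ 3 = real n"
    by simp
  finally have "real l ^ 3 \<le> 0.004410944 * real n"
    by (simp add: power3_eq_cube)
  moreover have "64 \<le> real l ^ 3"
    using power_mono[of 4 "real l" 3] assms(2) by simp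
  ultimately have "real (128 * l ^ 3 + 3) \<le> real n"
    by simp
  then show ?thesis
    by (simp only: of_nat_le_iff)
qed

lemma local_lemma_parameters:
  fixes l n :: nat
  assumes "real l \<le> 0.164 * root 3 (real n)" and "4 \<le> l"
  defines "p \<equiv> 1 / real (n * (n - 1) * (n - 2) * (n - 3))"
  shows "4 * p * real (32 * l ^ 3 * (n * (n - 1) * (n - 2))) \<le> 1" and "p \<le> 1/4" and "l \<le> n"
proof -
  have n: "128 * l ^ 3 + 3 \<le> n"
    using assms(1,2) by (rule cube_bound_of_root_bound)
  define N3 where "N3 = real (n * (n - 1) * (n - 2))"
  have "l \<le> l ^ 3"
    using assms(2) by (simp add: self_le_power)
  then show "l \<le> n"
    using n by linarith
  have N3: "0 < N3"
    using n by (simp add: N3_def)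
  have n3: "real (128 * l ^ 3) \<le> real (n - 3)"
    using n by (intro of_nat_mono) linarith
  have p_eq: "p = 1 / (N3 * real (n - 3))"
    by (simp add: p_def N3_def)
  have "real (32 * l ^ 3 * (n * (n - 1) * (n - 2))) = real (32 * l ^ 3) * N3"
    by (simp only: N3_def of_nat_mult)
  then have "4 * p * real (32 * l ^ 3 * (n * (n - 1) * (n - 2)))
      = 4 * (1 / (N3 * real (n - 3))) * (real (32 * l ^ 3) * N3)"
    by (simp only: p_eq)
  also have "\<dots> = real (128 * l ^ 3) / real (n - 3)"
    using N3 by (simp add: field_simps)
  also have "\<dots> \<le> 1"
    using n3 by (simp add: divide_le_eq_1 less_le_not_le)
  finally show "4 * p * real (32 * l ^ 3 * (n * (n - 1) * (n - 2))) \<le> 1" .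
  have "4 \<le> n"
    using n \<open>l \<le> l ^ 3\<close> assms(2) by linarith
  then have "4 * 3 * 2 * 1 \<le> n * (n - 1) * (n - 2) * (n - 3)"
    by (intro mult_le_mono) auto
  then have "real 4 \<le> real (n * (n - 1) * (n - 2) * (n - 3))"
    by (intro of_nat_mono) simp
  moreover have "1 / M \<le> 1 / 4" if "real 4 \<le> M" for M :: real
    using that by simp
  ultimately show "p \<le> 1/4"
    unfolding p_def by blast
qed

lemma window_events_avoidable:
  assumes S: "partial_SQS X \<B>" and "4 \<le> l" and "real l \<le> 0.164 * root 3 (real (card X))"
  shows "avoiding (sequencings X) (window_event X) (block_windows (card X) l \<B>) \<noteq> {}"
proof -
  define n where "n = card X"
  note parameters = local_lemma_parameters[OF assms(3)[folded n_def] assms(2)]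
  have finX: "finite X"
    using S by (simp add: partial_SQS_def)
  show ?thesis
  proof (rule lopsided_local_lemma)
    show "card ({b. \<not> compatible (window_pattern (card X) a) (window_pattern (card X) b)}
        \<inter> block_windows (card X) l \<B>) \<le> 32 * l ^ 3 * (n * (n - 1) * (n - 2))"
      if "a \<in> block_windows (card X) l \<B>" for a
      using card_incompatible_windows_le[OF S that] by (simp add: n_def)
    show "real (card (window_event X a \<inter> avoiding (sequencings X) (window_event X) T))
        \<le> 1 / real (n * (n - 1) * (n - 2) * (n - 3))
          * real (card (avoiding (sequencings X) (window_event X) T))"
      if "a \<in> block_windows (card X) l \<B>" and "T \<subseteq> block_windows (card X) l \<B>"
        and "T \<inter> {b. \<not> compatible (window_pattern (card X) a) (window_pattern (card X) b)} = {}" for a T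
      using window_event_conditional_bound[OF S that(1)] that(3) unfolding n_def by blast
  qed (use parameters finX finite_sequencings sequencings_nonempty finite_block_windows[OF S] in auto)
qed

theorem corollary4:
  fixes X :: "'a set" and \<B> :: "'a set set" and l :: nat
  assumes "partial_SQS X \<B>"
    and "l \<ge> 1"
    and "real l \<le> 0.164 * root 3 (real (card X))"
  shows "\<exists>\<phi>. sequencing X \<phi> \<and> cyclically_good X \<B> l \<phi>"
proof (cases "l < 4")
  case True
  have "sequencings X \<noteq> {}"
    using assms(1) by (intro sequencings_nonempty) (simp add: partial_SQS_def)
  then obtain \<phi> where "\<phi> \<in> sequencings X"
    by blast
  then show ?thesis
    using cyclically_good_if_less_4[OF assms(1) True] sequencing_if_in_sequencings by blast
next
  case False
  then obtain \<phi> where \<phi>: "\<phi> \<in> avoiding (sequencings X) (window_event X) (block_windows (card X) l \<B>)"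
    using window_events_avoidable[OF assms(1) _ assms(3)] by fastforce
  have "l \<le> card X"
    using local_lemma_parameters(3)[OF assms(3)] False by simp
  then have "cyclically_good X \<B> l \<phi>"
    using \<phi> by (rule cyclically_good_if_avoiding_window_events[OF assms(1)])
  moreover have "sequencing X \<phi>"
    using \<phi> by (simp add: avoiding_def sequencing_if_in_sequencings)
  ultimately show ?thesis by blast
qed

end
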